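(* Let $\varphi:\mathbb B\to\mathbb B$ be slice regular with $\varphi(\mathbb B_I)\subseteq\mathbb B_I$ for some $I\in\mathbb S$. Then for every $f\in H^2(\mathbb B)$, $$\|f^{\odot}\varphi\|_2\le\Big(\frac{1+|\varphi(0)|}{1-|\varphi(0)|}\Big)^{1/2}\|f\|_2,\qquad\|f_{\odot}\varphi\|_2\le\Big(\frac{1+|\varphi(0)|}{1-|\varphi(0)|}\Big)^{1/2}\|f\|_2.$$
   Context: $\mathbb H$ quaternions, $\mathbb S=\{q:q^2=-1\}$, $\mathbb C_I=\mathbb R+I\mathbb R$, $\mathbb B$ open unit ball, $\mathbb B_I=\mathbb B\cap\mathbb C_I$. Slice regular functions on $\mathbb B$ are convergent power series $\sum_nq^na_n$; $\ast$-product $\big(\sum q^na_n\big)\ast\big(\sum q^nb_n\big)=\sum_nq^n\sum_ka_kb_{n-k}$, $\varphi^{\ast0}=1$, $\varphi^{\ast n}=\varphi\ast\varphi^{\ast(n-1)}$. For $f=\sum q^na_n$: $f^{\odot}\varphi=\sum_n\varphi^{\ast n}a_n$, $f_{\odot}\varphi=\sum_na_n\ast\varphi^{\ast n}$. $H^2(\mathbb B)$: regular $f=\sum q^na_n$ with $\|f\|_2^2=\sum|a_n|^2<\infty$. *)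

theory Defs
  imports "HOL-Analysis.Analysis"
begin

text \<open>Quaternions via the Cayley--Dickson construction: the pair (z, w) of complex
numbers stands for z + w j, where j z = cnj z j.  The norm inherited from the
product type, sqrt (norm z ^ 2 + norm w ^ 2), is the usual quaternion modulus.\<close>

type_synonym quat = "complex \<times> complex"

definition qmul :: "quat \<Rightarrow> quat \<Rightarrow> quat" where
  "qmul p q = (fst p * fst q - snd p * cnj (snd q), fst p * snd q + snd p * cnj (fst q))"

definition qone :: quat where "qone = (1, 0)"

definition qreal :: "real \<Rightarrow> quat" where "qreal r = (complex_of_real r, 0)"

fun qpow :: "quat \<Rightarrow> nat \<Rightarrow> quat" where
  "qpow q 0 = qone"
| "qpow q (Suc n) = qmul q (qpow q n)"

definition imag_units :: "quat set" where
  "imag_units = {I. qmul I I = - qone}"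

definition slice :: "quat \<Rightarrow> quat set" where
  "slice I = {x. \<exists>a b::real. x = qreal a + b *\<^sub>R I}"

definition qball :: "quat set" where
  "qball = {q. norm q < 1}"

definition pseries :: "(nat \<Rightarrow> quat) \<Rightarrow> quat \<Rightarrow> quat" where
  "pseries a q = (\<Sum>n. qmul (qpow q n) (a n))"

definition slice_regular_ball :: "(nat \<Rightarrow> quat) \<Rightarrow> bool" where
  "slice_regular_ball a \<longleftrightarrow> (\<forall>q\<in>qball. summable (\<lambda>n. qmul (qpow q n) (a n)))"

definition sprod :: "(nat \<Rightarrow> quat) \<Rightarrow> (nat \<Rightarrow> quat) \<Rightarrow> nat \<Rightarrow> quat" where
  "sprod a b n = (\<Sum>k\<le>n. qmul (a k) (b (n - k)))"

fun spow :: "(nat \<Rightarrow> quat) \<Rightarrow> nat \<Rightarrow> nat \<Rightarrow> quat" where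
  "spow c 0 = (\<lambda>k. if k = 0 then qone else 0)"
| "spow c (Suc m) = sprod c (spow c m)"

definition in_H2 :: "(nat \<Rightarrow> quat) \<Rightarrow> bool" where
  "in_H2 a \<longleftrightarrow> summable (\<lambda>n. (norm (a n))^2)"

definition H2_norm :: "(nat \<Rightarrow> quat) \<Rightarrow> real" where
  "H2_norm a = sqrt (\<Sum>n. (norm (a n))^2)"

text \<open>Coefficients of f^odot phi = sum_n phi^{*n} a_n and of f_odot phi = sum_n a_n * phi^{*n}.
The k-th coefficient of phi^{*n} a_n is (phi^{*n})_k a_n, that of a_n * phi^{*n} is
a_n (phi^{*n})_k.\<close>
definition comp_right :: "(nat \<Rightarrow> quat) \<Rightarrow> (nat \<Rightarrow> quat) \<Rightarrow> nat \<Rightarrow> quat" where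
  "comp_right a c k = (\<Sum>n. qmul (spow c n k) (a n))"

definition comp_left :: "(nat \<Rightarrow> quat) \<Rightarrow> (nat \<Rightarrow> quat) \<Rightarrow> nat \<Rightarrow> quat" where
  "comp_left a c k = (\<Sum>n. qmul (a n) (spow c n k))"

end

theory Submission
  imports
    Defs
    "HOL-Computational_Algebra.Polynomial"
    "HOL-Computational_Algebra.Formal_Power_Series"
    "HOL-Complex_Analysis.Cauchy_Integral_Formula"
begin

text \<open>
  The complex core is Littlewood's subordination principle with the sharp constant: if g is a
  self-map of the unit disc, the coefficients of F = sum a_n g^n satisfy
  sum |F_k|^2 <= (1 + |g(0)|) / (1 - |g(0)|) * sum |a_n|^2.
  For finite sections, with g replaced by a Taylor polynomial p that still maps the circle
  |z| = r into the closed disc, |F(z)|^2 is dominated by the Hermitian Toeplitz form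
  sum a_m cnj(a_n) K(p(z))_mn, where K(w)_mn = w^(m-n) on and below the diagonal and
  cnj(w)^(n-m) above it.  Its entries are polynomials in p(z) or their conjugates, so averaging
  over enough roots of unity on the circle gives exactly the form at w = p(0) = g(0), which the
  Schur test bounds; comparing with Parseval's identity for the same average bounds the
  coefficients of F.  Letting r -> 1 and the sections grow gives the bound.

  For quaternions, conjugation by a unit quaternion moves the preserved slice C_I onto C_i.
  A slice regular function preserving C_i has complex coefficients gamma_n, and writing
  a_n = alpha_n + beta_n j, both compositions split into complex compositions of alpha and beta
  with gamma or with its conjugate, each of which is again a self-map of the disc.
\<close>

section \<open>Averages over roots of unity\<close>

definition unit_root :: "nat \<Rightarrow> nat \<Rightarrow> complex" where
  "unit_root M j = cis (2 * pi * real j / real M)"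

lemma norm_unit_root [simp]: "norm (unit_root M j) = 1"
  by (simp add: unit_root_def)

lemma unit_root_power: "unit_root M j ^ k = unit_root M k ^ j"
  unfolding unit_root_def Complex.DeMoivre
  by (intro arg_cong[where f = cis]) (simp add: field_simps)

lemma unit_root_self [simp]: "0 < M \<Longrightarrow> unit_root M M = 1"
  by (simp add: unit_root_def)

lemma sum_unit_root_orthogonal:
  assumes "k < M" "l < M"
  shows "(\<Sum>j<M. unit_root M j ^ k * cnj (unit_root M j) ^ l) = (if k = l then of_nat M else 0)"
proof -
  define w where "w = unit_root M k / unit_root M l"
  have "unit_root M j ^ k * cnj (unit_root M j) ^ l = w ^ j" for j
  proof -
    have "cnj (unit_root M j) = inverse (unit_root M j)"
      by (simp add: unit_root_def cis_cnj)
    then show ?thesis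
      by (simp add: w_def unit_root_power[of M j] power_mult_distrib power_inverse divide_inverse)
  qed
  moreover have "w ^ M = 1"
    using assms by (simp add: w_def power_divide unit_root_power[of M _ M])
  moreover have "w = 1 \<longleftrightarrow> k = l"
  proof
    assume "w = 1"
    then have "cis (2 * pi * real k / real M) = cis (2 * pi * real l / real M)"
      by (simp add: w_def unit_root_def)
    then show "k = l"
      using assms by (intro inj_onD[OF bij_betw_imp_inj_on[OF Complex.bij_betw_roots_unity]]) auto
  qed (metis w_def divide_self norm_unit_root norm_zero zero_neq_one)
  ultimately show ?thesis
    by (simp add: sum_gp_strict)
qed

lemma poly_eq_sum_lessThan:
  fixes p :: "'a::comm_semiring_1 poly"
  assumes "degree p < M"
  shows "poly p x = (\<Sum>i<M. coeff p i * x ^ i)"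
  unfolding poly_altdef
  by (rule sum.mono_neutral_left) (use assms in \<open>auto simp: coeff_eq_0\<close>)

lemma sum_poly_mult_cnj_poly_unit_root:
  fixes F G :: "complex poly" and r :: real
  assumes "degree F < M" "degree G < M"
  shows "(\<Sum>j<M. poly F (r * unit_root M j) * cnj (poly G (r * unit_root M j)))
       = of_nat M * (\<Sum>k<M. coeff F k * cnj (coeff G k) * r ^ (2 * k))"
proof -
  define X where "X k l = coeff F k * cnj (coeff G l) * r ^ (k + l)" for k l
  define Y where "Y j k l = unit_root M j ^ k * cnj (unit_root M j) ^ l" for j k l
  have "(\<Sum>j<M. poly F (r * unit_root M j) * cnj (poly G (r * unit_root M j)))
      = (\<Sum>j<M. \<Sum>k<M. \<Sum>l<M. X k l * Y j k l)"
    unfolding poly_eq_sum_lessThan[OF assms(1)] poly_eq_sum_lessThan[OF assms(2)]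
      cnj_sum sum_product
    by (simp add: X_def Y_def power_mult_distrib power_add mult_ac)
  also have "\<dots> = (\<Sum>k<M. \<Sum>l<M. X k l * (\<Sum>j<M. Y j k l))"
    by (subst sum.swap, rule sum.cong[OF refl], subst sum.swap) (simp add: sum_distrib_left)
  also have "\<dots> = (\<Sum>k<M. \<Sum>l<M. if k = l then X k l * of_nat M else 0)"
    by (intro sum.cong refl) (simp add: Y_def sum_unit_root_orthogonal)
  also have "\<dots> = (\<Sum>k<M. X k k * of_nat M)"
    by (simp add: sum.delta)
  finally show ?thesis
    by (simp add: X_def sum_distrib_left mult_ac flip: mult_2)
qed

lemma sum_norm_poly_unit_root_sq:
  fixes F :: "complex poly" and r :: real
  assumes "degree F < M"
  shows "(\<Sum>j<M. (cmod (poly F (r * unit_root M j)))\<^sup>2)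
       = real M * (\<Sum>k<M. (cmod (coeff F k))\<^sup>2 * r ^ (2 * k))"
proof -
  have "complex_of_real (\<Sum>j<M. (cmod (poly F (r * unit_root M j)))\<^sup>2)
      = of_nat M * (\<Sum>k<M. coeff F k * cnj (coeff F k) * r ^ (2 * k))"
    unfolding of_real_sum complex_norm_square by (rule sum_poly_mult_cnj_poly_unit_root[OF assms assms])
  also have "\<dots> = complex_of_real (real M * (\<Sum>k<M. (cmod (coeff F k))\<^sup>2 * r ^ (2 * k)))"
    by (simp only: of_real_mult of_real_sum complex_norm_square of_real_of_nat_eq)
  finally show ?thesis
    by (simp only: of_real_eq_iff)
qed

lemma sum_poly_unit_root:
  fixes G :: "complex poly" and r :: real
  assumes "degree G < M"
  shows "(\<Sum>j<M. poly G (r * unit_root M j)) = of_nat M * coeff G 0"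
proof -
  have "(\<Sum>j<M. poly G (r * unit_root M j))
      = (\<Sum>k<M. coeff G k * r ^ k * (\<Sum>j<M. unit_root M j ^ k * cnj (unit_root M j) ^ 0))"
    unfolding poly_eq_sum_lessThan[OF assms]
    by (subst sum.swap) (simp add: sum_distrib_left power_mult_distrib mult_ac)
  also have "\<dots> = (\<Sum>k<M. if k = 0 then of_nat M * coeff G k else 0)"
    by (intro sum.cong refl) (use sum_unit_root_orthogonal[of _ M 0] in auto)
  finally show ?thesis
    using assms by simp
qed

section \<open>Hermitian Toeplitz forms\<close>

definition toeplitz_kernel :: "complex \<Rightarrow> nat \<Rightarrow> nat \<Rightarrow> complex" where
  "toeplitz_kernel z m n = (if n \<le> m then z ^ (m - n) else cnj z ^ (n - m))"

definition toeplitz_form :: "(nat \<Rightarrow> complex) \<Rightarrow> nat \<Rightarrow> complex \<Rightarrow> complex" where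
  "toeplitz_form a N z = (\<Sum>m<N. \<Sum>n<N. a m * cnj (a n) * toeplitz_kernel z m n)"

lemma toeplitz_kernel_simps [simp]:
  "toeplitz_kernel z (Suc m) (Suc n) = toeplitz_kernel z m n"
  "toeplitz_kernel z 0 0 = 1"
  "toeplitz_kernel z (Suc m) 0 = z ^ Suc m"
  "toeplitz_kernel z 0 (Suc n) = cnj z ^ Suc n"
  by (auto simp: toeplitz_kernel_def)

lemma toeplitz_form_Suc:
  fixes a :: "nat \<Rightarrow> complex" and N :: nat and z :: complex
  defines "g \<equiv> (\<Sum>n<N. a (Suc n) * z ^ n)"
  shows "toeplitz_form a (Suc N) z
       = a 0 * cnj (a 0) + a 0 * cnj (z * g) + cnj (a 0) * (z * g) + toeplitz_form (\<lambda>n. a (Suc n)) N z"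
proof -
  have row0: "(\<Sum>n<Suc N. a 0 * cnj (a n) * toeplitz_kernel z 0 n) = a 0 * cnj (a 0) + a 0 * cnj (z * g)"
    by (subst sum.lessThan_Suc_shift) (simp add: g_def cnj_sum sum_distrib_left mult_ac)
  have row_Suc: "(\<Sum>n<Suc N. a (Suc m) * cnj (a n) * toeplitz_kernel z (Suc m) n)
       = cnj (a 0) * (z * (a (Suc m) * z ^ m))
         + (\<Sum>n<N. a (Suc m) * cnj (a (Suc n)) * toeplitz_kernel z m n)" for m
    by (subst sum.lessThan_Suc_shift) (simp add: mult_ac)
  have "toeplitz_form a (Suc N) z
      = (\<Sum>n<Suc N. a 0 * cnj (a n) * toeplitz_kernel z 0 n)
        + (\<Sum>m<N. \<Sum>n<Suc N. a (Suc m) * cnj (a n) * toeplitz_kernel z (Suc m) n)"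
    unfolding toeplitz_form_def by (rule sum.lessThan_Suc_shift)
  also have "\<dots> = a 0 * cnj (a 0) + a 0 * cnj (z * g)
      + ((\<Sum>m<N. cnj (a 0) * (z * (a (Suc m) * z ^ m))) + toeplitz_form (\<lambda>n. a (Suc n)) N z)"
    unfolding row0 row_Suc sum.distrib toeplitz_form_def ..
  also have "(\<Sum>m<N. cnj (a 0) * (z * (a (Suc m) * z ^ m))) = cnj (a 0) * (z * g)"
    by (simp add: g_def sum_distrib_left)
  finally show ?thesis
    by (simp add: add_ac)
qed

text \<open>Peel off a_0: in |a_0 + z g|^2 = |a_0|^2 + 2 Re (a_0 cnj (z g)) + |z g|^2 the first two
  terms are the first row and column of the form, and |z g| \<le> |g| hands the rest to the
  induction hypothesis.\<close>
lemma norm_sum_power_sq_le_toeplitz_form: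
  fixes a :: "nat \<Rightarrow> complex"
  assumes "norm z \<le> 1"
  shows "(cmod (\<Sum>n<N. a n * z ^ n))\<^sup>2 \<le> Re (toeplitz_form a N z)"
proof (induction N arbitrary: a)
  case 0
  then show ?case
    by (simp add: toeplitz_form_def)
next
  case (Suc N)
  define g where "g = (\<Sum>n<N. a (Suc n) * z ^ n)"
  have split: "(\<Sum>n<Suc N. a n * z ^ n) = a 0 + z * g"
    by (subst sum.lessThan_Suc_shift) (simp add: g_def sum_distrib_left mult_ac)
  have norm_sq: "(cmod w)\<^sup>2 = Re (w * cnj w)" for w
    by (metis Re_complex_of_real complex_norm_square)
  have "(cmod (a 0 + z * g))\<^sup>2
      = Re (a 0 * cnj (a 0) + a 0 * cnj (z * g) + cnj (a 0) * (z * g)) + (cmod (z * g))\<^sup>2"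
    unfolding norm_sq by (simp add: algebra_simps)
  also have "(cmod (z * g))\<^sup>2 \<le> (cmod g)\<^sup>2"
    using assms by (intro power_mono) (simp_all add: norm_mult mult_left_le_one_le)
  also have "(cmod g)\<^sup>2 \<le> Re (toeplitz_form (\<lambda>n. a (Suc n)) N z)"
    using Suc.IH[of "\<lambda>n. a (Suc n)"] by (simp add: g_def)
  finally show ?case
    unfolding split toeplitz_form_Suc[of a N z] by (simp add: g_def)
qed

lemma sum_geometric_le:
  fixes \<rho> :: real
  assumes "0 \<le> \<rho>" "\<rho> < 1"
  shows "(\<Sum>i<K. \<rho> ^ i) \<le> 1 / (1 - \<rho>)"
  using assms by (simp add: sum_gp_strict divide_right_mono)

text \<open>With truncated subtraction, m - n + (n - m) is the distance between m and n.\<close>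
lemma sum_power_dist_le:
  fixes \<rho> :: real
  assumes \<rho>: "0 \<le> \<rho>" "\<rho> < 1"
  shows "(\<Sum>n<N. \<rho> ^ (m - n + (n - m))) \<le> (1 + \<rho>) / (1 - \<rho>)"
proof -
  let ?A = "{..<N} \<inter> {..m}" and ?B = "{..<N} - {..m}"
  have "(\<Sum>n<N. \<rho> ^ (m - n + (n - m))) = (\<Sum>n\<in>?A. \<rho> ^ (m - n)) + (\<Sum>n\<in>?B. \<rho> ^ (n - m))"
    by (subst sum.Int_Diff[of _ _ "{..m}"]) (auto intro!: sum.cong)
  also have "(\<Sum>n\<in>?A. \<rho> ^ (m - n)) \<le> 1 / (1 - \<rho>)"
  proof -
    have "(\<Sum>n\<in>?A. \<rho> ^ (m - n)) = (\<Sum>i\<in>(\<lambda>n. m - n) ` ?A. \<rho> ^ i)"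
      by (subst sum.reindex) (auto simp: inj_on_def)
    also have "\<dots> \<le> (\<Sum>i<Suc m. \<rho> ^ i)"
      by (rule sum_mono2) (use \<rho> in auto)
    finally show ?thesis
      using sum_geometric_le[OF \<rho>, of "Suc m"] by linarith
  qed
  also have "(\<Sum>n\<in>?B. \<rho> ^ (n - m)) \<le> \<rho> / (1 - \<rho>)"
  proof -
    have "(\<Sum>n\<in>?B. \<rho> ^ (n - m)) = \<rho> * (\<Sum>n\<in>?B. \<rho> ^ (n - Suc m))"
      by (auto simp: sum_distrib_left Suc_diff_Suc simp flip: power_Suc intro!: sum.cong)
    also have "(\<Sum>n\<in>?B. \<rho> ^ (n - Suc m)) = (\<Sum>i\<in>(\<lambda>n. n - Suc m) ` ?B. \<rho> ^ i)"
      by (subst sum.reindex) (auto simp: inj_on_def)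
    also have "\<dots> \<le> (\<Sum>i<N. \<rho> ^ i)"
      by (rule sum_mono2) (use \<rho> in auto)
    finally show ?thesis
      using sum_geometric_le[OF \<rho>, of N] \<rho> mult_left_mono by fastforce
  qed
  finally show ?thesis
    using \<rho> by (simp add: add_divide_distrib)
qed

text \<open>Schur test: the entries have modulus |w|^|m-n|, so every row sum is at most
  (1 + |w|) / (1 - |w|).\<close>
lemma Re_toeplitz_form_le:
  fixes a :: "nat \<Rightarrow> complex"
  assumes w: "norm w < 1"
  shows "Re (toeplitz_form a N w) \<le> (1 + norm w) / (1 - norm w) * (\<Sum>n<N. (cmod (a n))\<^sup>2)"
proof -
  let ?\<rho> = "norm w" and ?x = "\<lambda>n. cmod (a n)"
  let ?P = "\<lambda>m n. ?\<rho> ^ (m - n + (n - m))"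
  have norm_kernel: "cmod (toeplitz_kernel w m n) = ?P m n" for m n
    by (simp add: toeplitz_kernel_def norm_power)
  have "Re (toeplitz_form a N w) \<le> (\<Sum>m<N. \<Sum>n<N. ?x m * ?x n * ?P m n)"
    unfolding toeplitz_form_def
    by (rule order_trans[OF complex_Re_le_cmod order_trans[OF norm_sum sum_mono]],
        rule order_trans[OF norm_sum sum_mono]) (simp add: norm_mult norm_kernel)
  also have "\<dots> \<le> (\<Sum>m<N. \<Sum>n<N. ((?x m)\<^sup>2 / 2 + (?x n)\<^sup>2 / 2) * ?P m n)"
    using sum_squares_bound[of "?x _" "?x _"] by (intro sum_mono mult_right_mono) (simp_all add: field_simps)
  also have "\<dots> = (\<Sum>m<N. \<Sum>n<N. (?x m)\<^sup>2 / 2 * ?P m n) + (\<Sum>m<N. \<Sum>n<N. (?x n)\<^sup>2 / 2 * ?P m n)"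
    by (simp add: distrib_right sum.distrib)
  also have "(\<Sum>m<N. \<Sum>n<N. (?x n)\<^sup>2 / 2 * ?P m n) = (\<Sum>m<N. \<Sum>n<N. (?x m)\<^sup>2 / 2 * ?P m n)"
    by (subst sum.swap) (simp only: add.commute)
  also have "\<dots> + \<dots> = (\<Sum>m<N. (?x m)\<^sup>2 * (\<Sum>n<N. ?P m n))"
    by (simp add: sum_distrib_left flip: sum.distrib)
  also have "\<dots> \<le> (\<Sum>m<N. (?x m)\<^sup>2 * ((1 + ?\<rho>) / (1 - ?\<rho>)))"
    by (intro sum_mono mult_left_mono sum_power_dist_le) (use w in auto)
  finally show ?thesis
    by (simp add: sum_distrib_left mult.commute)
qed

section \<open>Subordination for polynomials\<close>

lemma degree_power_le_mult: "d \<le> N \<Longrightarrow> degree (p ^ d) \<le> N * degree p"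
  by (metis degree_power_le mult.commute mult_le_mono1 order_trans)

lemma sum_toeplitz_form_poly_unit_root:
  fixes p :: "complex poly" and a :: "nat \<Rightarrow> complex" and r :: real
  assumes "N * degree p < M"
  shows "(\<Sum>j<M. toeplitz_form a N (poly p (r * unit_root M j))) = of_nat M * toeplitz_form a N (coeff p 0)"
proof -
  have deg: "degree (p ^ d) < M" if "d < N" for d
    using degree_power_le_mult[of d N p] that assms by linarith
  have kernel: "(\<Sum>j<M. toeplitz_kernel (poly p (r * unit_root M j)) m n)
      = of_nat M * toeplitz_kernel (coeff p 0) m n" if "m < N" "n < N" for m n
  proof (cases "n \<le> m")
    case True
    then show ?thesis
      using sum_poly_unit_root[OF deg[of "m - n"]] that
      by (simp add: toeplitz_kernel_def poly_power coeff_0_power)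
  next
    case False
    then show ?thesis
      using arg_cong[OF sum_poly_unit_root[OF deg[of "n - m"]], of cnj] that
      by (simp add: toeplitz_kernel_def poly_power coeff_0_power cnj_sum)
  qed
  have "(\<Sum>j<M. toeplitz_form a N (poly p (r * unit_root M j)))
      = (\<Sum>m<N. \<Sum>n<N. a m * cnj (a n) * (\<Sum>j<M. toeplitz_kernel (poly p (r * unit_root M j)) m n))"
    unfolding toeplitz_form_def sum_distrib_left
    by (subst sum.swap, rule sum.cong[OF refl], subst sum.swap, rule refl)
  also have "\<dots> = (\<Sum>m<N. \<Sum>n<N. of_nat M * (a m * cnj (a n) * toeplitz_kernel (coeff p 0) m n))"
    by (intro sum.cong refl) (simp add: kernel)
  also have "\<dots> = of_nat M * toeplitz_form a N (coeff p 0)"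
    by (simp add: toeplitz_form_def sum_distrib_left)
  finally show ?thesis .
qed

lemma norm_coeff_sum_smult_power_le:
  fixes p :: "complex poly" and a :: "nat \<Rightarrow> complex" and r :: real
  assumes p_le: "\<And>z. cmod z = r \<Longrightarrow> cmod (poly p z) \<le> 1"
    and r: "0 \<le> r" and p0: "cmod (coeff p 0) < 1"
  shows "(\<Sum>k<Q. (cmod (coeff (\<Sum>n<N. smult (a n) (p ^ n)) k))\<^sup>2 * r ^ (2 * k))
         \<le> (1 + cmod (coeff p 0)) / (1 - cmod (coeff p 0)) * (\<Sum>n<N. (cmod (a n))\<^sup>2)"
proof -
  define M where "M = Q + N * degree p + 1"
  define F where "F = (\<Sum>n<N. smult (a n) (p ^ n))"
  define z where "z j = complex_of_real r * unit_root M j" for j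
  have M: "real M > 0"
    unfolding M_def by linarith
  have "degree F \<le> N * degree p"
    unfolding F_def
    by (intro degree_sum_le) (auto intro: order_trans[OF degree_smult_le] degree_power_le_mult)
  then have deg_F: "degree F < M"
    by (simp add: M_def)
  have "real M * (\<Sum>k<Q. (cmod (coeff F k))\<^sup>2 * r ^ (2 * k))
      \<le> real M * (\<Sum>k<M. (cmod (coeff F k))\<^sup>2 * r ^ (2 * k))"
    by (intro mult_left_mono sum_mono2) (use r in \<open>auto simp: M_def\<close>)
  also have "\<dots> = (\<Sum>j<M. (cmod (poly F (z j)))\<^sup>2)"
    unfolding z_def by (rule sum_norm_poly_unit_root_sq[OF deg_F, symmetric])
  also have "\<dots> \<le> (\<Sum>j<M. Re (toeplitz_form a N (poly p (z j))))"
  proof (rule sum_mono)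
    fix j
    have "cmod (z j) = r"
      using r by (simp add: z_def norm_mult)
    then show "(cmod (poly F (z j)))\<^sup>2 \<le> Re (toeplitz_form a N (poly p (z j)))"
      using norm_sum_power_sq_le_toeplitz_form[OF p_le] by (simp add: F_def poly_sum poly_power)
  qed
  also have "\<dots> = real M * Re (toeplitz_form a N (coeff p 0))"
    using sum_toeplitz_form_poly_unit_root[of N p M a r] by (simp add: z_def M_def flip: Re_sum)
  also have "\<dots> \<le> real M * ((1 + cmod (coeff p 0)) / (1 - cmod (coeff p 0)) * (\<Sum>n<N. (cmod (a n))\<^sup>2))"
    by (intro mult_left_mono Re_toeplitz_form_le p0) simp
  finally show ?thesis
    using M by (simp only: F_def mult_le_cancel_left_pos)
qed

section \<open>Self-maps of the unit disc\<close>

definition partial_sum_poly :: "(nat \<Rightarrow> 'a::comm_semiring_0) \<Rightarrow> nat \<Rightarrow> 'a poly" where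
  "partial_sum_poly g L = (\<Sum>i\<le>L. monom (g i) i)"

lemma coeff_partial_sum_poly: "coeff (partial_sum_poly g L) i = (if i \<le> L then g i else 0)"
  by (simp add: partial_sum_poly_def coeff_sum coeff_monom)

lemma poly_partial_sum_poly:
  fixes g :: "nat \<Rightarrow> 'a::comm_semiring_1"
  shows "poly (partial_sum_poly g L) z = (\<Sum>i\<le>L. g i * z ^ i)"
  by (simp add: partial_sum_poly_def poly_sum poly_monom)

lemma coeff_partial_sum_poly_power:
  fixes g :: "nat \<Rightarrow> 'a::comm_semiring_1"
  assumes "k \<le> L"
  shows "coeff (partial_sum_poly g L ^ n) k = fps_nth (Abs_fps g ^ n) k"
  using assms
proof (induction n arbitrary: k)
  case 0
  then show ?case
    by simp
next
  case (Suc n)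
  then show ?case
    by (auto simp: coeff_mult fps_mult_nth atLeast0AtMost coeff_partial_sum_poly intro!: sum.cong)
qed

lemma fps_nth_power_cnj:
  "fps_nth (Abs_fps (\<lambda>i. cnj (g i)) ^ n) k = cnj (fps_nth (Abs_fps g ^ n) k)"
  by (induction n arbitrary: k) (simp_all add: fps_mult_nth cnj_sum)

lemma sum_atLeastLessThan_eq_sum_lessThan_if:
  fixes m N :: nat
  shows "(\<Sum>n\<in>{m..<N}. f n) = (\<Sum>n<N. if m \<le> n then f n else 0)"
  by (rule sum.mono_neutral_cong_left) auto

locale disc_selfmap =
  fixes g :: "nat \<Rightarrow> complex"
  assumes summable_powser: "\<And>z. cmod z < 1 \<Longrightarrow> summable (\<lambda>n. g n * z ^ n)"
    and norm_powser_less_1: "\<And>z. cmod z < 1 \<Longrightarrow> cmod (\<Sum>n. g n * z ^ n) < 1"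
begin

lemma norm_g0_less_1: "cmod (g 0) < 1"
  using norm_powser_less_1[of 0] by (simp add: powser_zero)

text \<open>The partial sums converge uniformly on the circle |z| = r < 1, where the self-map
  stays below its maximum modulus s < 1.\<close>
lemma eventually_norm_partial_sum_poly_le_1:
  assumes r: "0 \<le> r" "r < 1"
  shows "\<exists>L0. \<forall>L\<ge>L0. \<forall>z. cmod z = r \<longrightarrow> cmod (poly (partial_sum_poly g L) z) \<le> 1"
proof -
  let ?\<phi> = "\<lambda>z. \<Sum>i. g i * z ^ i"
  have "ereal r < 1"
    using r by simp
  also have "1 \<le> conv_radius g"
    by (rule conv_radius_geI_ex') (simp add: summable_powser)
  finally have r_conv: "ereal r < conv_radius g" .
  have "continuous_on (cball 0 r) ?\<phi>"
    using powser_continuous_suminf[OF r_conv, of 0] by simp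
  then have cont: "continuous_on (sphere 0 r) (\<lambda>z. cmod (?\<phi> z))"
    by (intro continuous_on_norm continuous_on_subset[OF _ sphere_cball])
  have nonempty: "sphere (0::complex) r \<noteq> {}"
    using r by simp
  obtain z0 where z0: "z0 \<in> sphere 0 r"
    and max: "\<And>z. z \<in> sphere 0 r \<Longrightarrow> cmod (?\<phi> z) \<le> cmod (?\<phi> z0)"
    using continuous_attains_sup[OF compact_sphere nonempty cont] by blast
  define s where "s = cmod (?\<phi> z0)"
  have "s < 1"
    using z0 r norm_powser_less_1[of z0] by (simp add: s_def)
  then have "\<forall>\<^sub>F n in sequentially. \<forall>z\<in>cball 0 r. dist (\<Sum>i<n. g i * z ^ i) (?\<phi> z) < 1 - s"
    using uniform_limitD[OF powser_uniform_limit[OF r_conv, of 0], of "1 - s"] by simp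
  then obtain L0 where L0: "\<And>n z. n \<ge> L0 \<Longrightarrow> z \<in> cball 0 r \<Longrightarrow>
      dist (\<Sum>i<n. g i * z ^ i) (?\<phi> z) < 1 - s"
    unfolding eventually_sequentially by blast
  have "cmod (poly (partial_sum_poly g L) z) \<le> 1" if "L \<ge> L0" "cmod z = r" for L z
  proof -
    have "poly (partial_sum_poly g L) z = (\<Sum>i<Suc L. g i * z ^ i)"
      by (simp add: poly_partial_sum_poly lessThan_Suc_atMost)
    moreover have "cmod (?\<phi> z) \<le> s"
      using max that by (simp add: s_def)
    ultimately show ?thesis
      using L0[of "Suc L" z] that norm_triangle_ineq2[of "poly (partial_sum_poly g L) z" "?\<phi> z"]
      by (simp add: dist_norm)
  qed
  then show ?thesis
    by blast
qed

lemma composition_coeff_partial_le_radius: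
  assumes r: "0 \<le> r" "r < 1"
  shows "(\<Sum>k<Q. (cmod (\<Sum>n<N. fps_nth (Abs_fps g ^ n) k * \<alpha> n))\<^sup>2 * r ^ (2 * k))
         \<le> (1 + cmod (g 0)) / (1 - cmod (g 0)) * (\<Sum>n<N. (cmod (\<alpha> n))\<^sup>2)"
proof -
  obtain L0 where L0: "\<And>L z. L \<ge> L0 \<Longrightarrow> cmod z = r \<Longrightarrow> cmod (poly (partial_sum_poly g L) z) \<le> 1"
    using eventually_norm_partial_sum_poly_le_1[OF r] by blast
  define p where "p = partial_sum_poly g (max L0 Q)"
  have p0: "coeff p 0 = g 0"
    by (simp add: p_def coeff_partial_sum_poly)
  have coeff_eq: "coeff (\<Sum>n<N. smult (\<alpha> n) (p ^ n)) k = (\<Sum>n<N. fps_nth (Abs_fps g ^ n) k * \<alpha> n)"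
    if "k < Q" for k
    using that by (simp add: coeff_sum p_def coeff_partial_sum_poly_power mult.commute)
  have "(\<Sum>k<Q. (cmod (coeff (\<Sum>n<N. smult (\<alpha> n) (p ^ n)) k))\<^sup>2 * r ^ (2 * k))
      \<le> (1 + cmod (coeff p 0)) / (1 - cmod (coeff p 0)) * (\<Sum>n<N. (cmod (\<alpha> n))\<^sup>2)"
    by (rule norm_coeff_sum_smult_power_le) (use L0 r p0 norm_g0_less_1 in \<open>auto simp: p_def\<close>)
  also have "(\<Sum>k<Q. (cmod (coeff (\<Sum>n<N. smult (\<alpha> n) (p ^ n)) k))\<^sup>2 * r ^ (2 * k))
      = (\<Sum>k<Q. (cmod (\<Sum>n<N. fps_nth (Abs_fps g ^ n) k * \<alpha> n))\<^sup>2 * r ^ (2 * k))"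
    by (rule sum.cong[OF refl]) (simp only: lessThan_iff coeff_eq)
  finally show ?thesis
    by (simp only: p0)
qed

lemma composition_coeff_partial_le:
  "(\<Sum>k<Q. (cmod (\<Sum>n<N. fps_nth (Abs_fps g ^ n) k * \<alpha> n))\<^sup>2)
     \<le> (1 + cmod (g 0)) / (1 - cmod (g 0)) * (\<Sum>n<N. (cmod (\<alpha> n))\<^sup>2)"
proof -
  let ?X = "\<lambda>k. (cmod (\<Sum>n<N. fps_nth (Abs_fps g ^ n) k * \<alpha> n))\<^sup>2"
  have "((\<lambda>r. \<Sum>k<Q. ?X k * r ^ (2 * k)) \<longlongrightarrow> (\<Sum>k<Q. ?X k * 1 ^ (2 * k))) (at_left 1)"
    by (intro tendsto_intros)
  moreover have "\<forall>\<^sub>F r in at_left (1::real). r \<in> {0<..<1}"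
    by (rule eventually_at_left_real) simp
  then have "\<forall>\<^sub>F r in at_left 1.
      (\<Sum>k<Q. ?X k * r ^ (2 * k)) \<le> (1 + cmod (g 0)) / (1 - cmod (g 0)) * (\<Sum>n<N. (cmod (\<alpha> n))\<^sup>2)"
    by eventually_elim (rule composition_coeff_partial_le_radius; simp)
  ultimately show ?thesis
    using tendsto_le[OF trivial_limit_at_left_real tendsto_const] by fastforce
qed


lemma disc_selfmap_cnj: "disc_selfmap (\<lambda>n. cnj (g n))"
proof
  fix z :: complex
  assume z: "cmod z < 1"
  then have "summable (\<lambda>n. g n * cnj z ^ n)"
    by (intro summable_powser) simp
  from bounded_linear.summable[OF bounded_linear_cnj this]
  show "summable (\<lambda>n. cnj (g n) * z ^ n)"
    by simp
  have "(\<Sum>n. cnj (g n) * z ^ n) = cnj (\<Sum>n. g n * cnj z ^ n)"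
    using bounded_linear.suminf[OF bounded_linear_cnj \<open>summable (\<lambda>n. g n * cnj z ^ n)\<close>] by simp
  then show "cmod (\<Sum>n. cnj (g n) * z ^ n) < 1"
    using norm_powser_less_1[of "cnj z"] z by simp
qed

lemma norm_composition_coeff_tail_sq_le:
  "(cmod (\<Sum>n\<in>{m..<N}. fps_nth (Abs_fps g ^ n) k * \<alpha> n))\<^sup>2
     \<le> (1 + cmod (g 0)) / (1 - cmod (g 0)) * (\<Sum>n\<in>{m..<N}. (cmod (\<alpha> n))\<^sup>2)"
proof -
  define \<beta> where "\<beta> n = (if m \<le> n then \<alpha> n else 0)" for n
  let ?b = "\<lambda>k. (cmod (\<Sum>n<N. fps_nth (Abs_fps g ^ n) k * \<beta> n))\<^sup>2"
  have "(\<Sum>n\<in>{m..<N}. fps_nth (Abs_fps g ^ n) k * \<alpha> n) = (\<Sum>n<N. fps_nth (Abs_fps g ^ n) k * \<beta> n)"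
    unfolding sum_atLeastLessThan_eq_sum_lessThan_if by (intro sum.cong) (auto simp: \<beta>_def)
  then have "(cmod (\<Sum>n\<in>{m..<N}. fps_nth (Abs_fps g ^ n) k * \<alpha> n))\<^sup>2 = ?b k"
    by simp
  also have "\<dots> \<le> (\<Sum>k'<Suc k. ?b k')"
    by (rule member_le_sum) auto
  also have "\<dots> \<le> (1 + cmod (g 0)) / (1 - cmod (g 0)) * (\<Sum>n<N. (cmod (\<beta> n))\<^sup>2)"
    by (rule composition_coeff_partial_le)
  also have "(\<Sum>n<N. (cmod (\<beta> n))\<^sup>2) = (\<Sum>n\<in>{m..<N}. (cmod (\<alpha> n))\<^sup>2)"
    unfolding sum_atLeastLessThan_eq_sum_lessThan_if by (intro sum.cong) (auto simp: \<beta>_def)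
  finally show ?thesis .
qed

lemma summable_composition_coeff:
  assumes \<alpha>: "summable (\<lambda>n. (cmod (\<alpha> n))\<^sup>2)"
  shows "summable (\<lambda>n. fps_nth (Abs_fps g ^ n) k * \<alpha> n)"
  unfolding summable_Cauchy
proof (intro allI impI)
  fix e :: real
  assume e: "0 < e"
  define C where "C = (1 + cmod (g 0)) / (1 - cmod (g 0))"
  have C: "0 < C"
    unfolding C_def using norm_g0_less_1 by (intro divide_pos_pos add_pos_nonneg) auto
  obtain M where M: "\<And>m n. m \<ge> M \<Longrightarrow> norm (\<Sum>i\<in>{m..<n}. (cmod (\<alpha> i))\<^sup>2) < e\<^sup>2 / C"
    using \<alpha>[unfolded summable_Cauchy, rule_format, of "e\<^sup>2 / C"] e C by auto
  have "norm (\<Sum>i\<in>{m..<n}. fps_nth (Abs_fps g ^ i) k * \<alpha> i) < e" if "m \<ge> M" for m n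
  proof -
    have "(norm (\<Sum>i\<in>{m..<n}. fps_nth (Abs_fps g ^ i) k * \<alpha> i))\<^sup>2
        \<le> C * (\<Sum>i\<in>{m..<n}. (cmod (\<alpha> i))\<^sup>2)"
      unfolding C_def by (rule norm_composition_coeff_tail_sq_le)
    also have "\<dots> < C * (e\<^sup>2 / C)"
      using M[OF that, of n] C by (simp add: sum_nonneg less_divide_eq mult.commute)
    finally show ?thesis
      using C e by (simp add: power_less_imp_less_base)
  qed
  then show "\<exists>M. \<forall>m\<ge>M. \<forall>n. norm (\<Sum>i\<in>{m..<n}. fps_nth (Abs_fps g ^ i) k * \<alpha> i) < e"
    by blast
qed

theorem composition_coeff_bound:
  assumes \<alpha>: "summable (\<lambda>n. (cmod (\<alpha> n))\<^sup>2)"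
  defines "b \<equiv> \<lambda>k. \<Sum>n. fps_nth (Abs_fps g ^ n) k * \<alpha> n"
  shows "summable (\<lambda>k. (cmod (b k))\<^sup>2)"
    and "(\<Sum>k. (cmod (b k))\<^sup>2) \<le> (1 + cmod (g 0)) / (1 - cmod (g 0)) * (\<Sum>n. (cmod (\<alpha> n))\<^sup>2)"
proof -
  let ?C = "(1 + cmod (g 0)) / (1 - cmod (g 0))"
  have C: "0 \<le> ?C"
    using norm_g0_less_1 by simp
  have partial: "(\<Sum>k<Q. (cmod (b k))\<^sup>2) \<le> ?C * (\<Sum>n. (cmod (\<alpha> n))\<^sup>2)" for Q
  proof (rule LIMSEQ_le_const2)
    show "(\<lambda>N. \<Sum>k<Q. (cmod (\<Sum>n<N. fps_nth (Abs_fps g ^ n) k * \<alpha> n))\<^sup>2) \<longlonglongrightarrow> (\<Sum>k<Q. (cmod (b k))\<^sup>2)"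
      unfolding b_def
      by (intro tendsto_sum tendsto_power tendsto_norm summable_LIMSEQ summable_composition_coeff \<alpha>)
    have section_le: "(\<Sum>n<N. (cmod (\<alpha> n))\<^sup>2) \<le> (\<Sum>n. (cmod (\<alpha> n))\<^sup>2)" for N
      by (rule sum_le_suminf[OF \<alpha>]) auto
    have "(\<Sum>k<Q. (cmod (\<Sum>n<N. fps_nth (Abs_fps g ^ n) k * \<alpha> n))\<^sup>2) \<le> ?C * (\<Sum>n. (cmod (\<alpha> n))\<^sup>2)" for N
      by (rule order_trans[OF composition_coeff_partial_le mult_left_mono[OF section_le C]])
    then show "\<exists>N0. \<forall>N\<ge>N0. (\<Sum>k<Q. (cmod (\<Sum>n<N. fps_nth (Abs_fps g ^ n) k * \<alpha> n))\<^sup>2)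
        \<le> ?C * (\<Sum>n. (cmod (\<alpha> n))\<^sup>2)"
      by blast
  qed
  show summable: "summable (\<lambda>k. (cmod (b k))\<^sup>2)"
    by (rule summableI_nonneg_bounded[OF _ partial]) simp
  show "(\<Sum>k. (cmod (b k))\<^sup>2) \<le> ?C * (\<Sum>n. (cmod (\<alpha> n))\<^sup>2)"
    by (rule suminf_le_const[OF summable partial])
qed

end

section \<open>Quaternion arithmetic\<close>

lemma qmul_Pair [simp]: "qmul (a, b) (c, d) = (a * c - b * cnj d, a * d + b * cnj c)"
  by (simp add: qmul_def)

lemma qmul_assoc: "qmul (qmul p q) s = qmul p (qmul q s)"
  by (cases p, cases q, cases s) (simp add: algebra_simps)

lemma qmul_add_left: "qmul (p + q) s = qmul p s + qmul q s"
  and qmul_add_right: "qmul s (p + q) = qmul s p + qmul s q"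
  and qmul_diff_left: "qmul (p - q) s = qmul p s - qmul q s"
  and qmul_diff_right: "qmul s (p - q) = qmul s p - qmul s q"
  by (cases p, cases q, cases s; simp add: algebra_simps)+

lemma qmul_minus_left: "qmul (- p) q = - qmul p q"
  and qmul_minus_right: "qmul q (- p) = - qmul q p"
  and qmul_scaleR_left: "qmul (r *\<^sub>R p) q = r *\<^sub>R qmul p q"
  and qmul_scaleR_right: "qmul q (r *\<^sub>R p) = r *\<^sub>R qmul q p"
  by (cases p, cases q; simp add: scaleR_conv_of_real algebra_simps)+

lemma qmul_zero_left [simp]: "qmul 0 p = 0"
  and qmul_zero_right [simp]: "qmul p 0 = 0"
  and qmul_qone_left [simp]: "qmul qone p = p"
  and qmul_qone_right [simp]: "qmul p qone = p"
  by (cases p; simp add: zero_prod_def qone_def)+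

lemma norm_Pair_sq: "(norm (a :: complex, b :: complex))\<^sup>2 = (cmod a)\<^sup>2 + (cmod b)\<^sup>2"
  by (simp add: norm_Pair)

lemma norm_qmul: "norm (qmul p q) = norm p * norm q"
proof -
  obtain a b c d where pq: "p = (a, b)" "q = (c, d)"
    by (cases p, cases q) auto
  have "complex_of_real ((cmod (a * c - b * cnj d))\<^sup>2 + (cmod (a * d + b * cnj c))\<^sup>2)
      = complex_of_real (((cmod a)\<^sup>2 + (cmod b)\<^sup>2) * ((cmod c)\<^sup>2 + (cmod d)\<^sup>2))"
    unfolding of_real_add of_real_mult complex_norm_square
    unfolding complex_cnj_diff complex_cnj_mult complex_cnj_add complex_cnj_cnj by algebra
  then have "(norm (qmul p q))\<^sup>2 = (norm p * norm q)\<^sup>2"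
    unfolding pq qmul_Pair power_mult_distrib norm_Pair_sq by (simp only: of_real_eq_iff)
  then show ?thesis
    by (simp add: power2_eq_iff_nonneg)
qed

lemma bounded_linear_qmul_left: "bounded_linear (\<lambda>x. qmul x p)"
  and bounded_linear_qmul_right: "bounded_linear (\<lambda>x. qmul p x)"
  by (rule bounded_linear_intro[where K = "norm p"];
      simp add: qmul_add_left qmul_add_right qmul_scaleR_left qmul_scaleR_right norm_qmul mult.commute)+

definition qconj :: "quat \<Rightarrow> quat" where
  "qconj p = (cnj (fst p), - snd p)"

lemma norm_qconj [simp]: "norm (qconj p) = norm p"
  by (cases p) (simp add: qconj_def norm_Pair)

lemma qmul_qconj_right: "qmul p (qconj p) = qreal ((norm p)\<^sup>2)"
  and qmul_qconj_left: "qmul (qconj p) p = qreal ((norm p)\<^sup>2)"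
  by (cases p; simp add: qconj_def qreal_def norm_Pair_sq complex_norm_square mult.commute
      del: of_real_power)+

lemma qreal_eq_scaleR: "qreal r = r *\<^sub>R qone"
  by (simp add: qreal_def qone_def scaleR_conv_of_real)

lemma qreal_1 [simp]: "qreal 1 = qone"
  by (simp add: qreal_def qone_def)

lemma qpow_Pair_0: "qpow (z, 0) n = (z ^ n, 0)"
  by (induction n) (simp_all add: qone_def)

definition quat_i :: quat where
  "quat_i = (\<i>, 0)"

lemma qmul_quat_i_quat_i: "qmul quat_i quat_i = - qone"
  by (simp add: quat_i_def qone_def)

lemma slice_quat_i_iff: "x \<in> slice quat_i \<longleftrightarrow> snd x = 0"
proof
  assume "snd x = 0"
  then have "x = qreal (Re (fst x)) + Im (fst x) *\<^sub>R quat_i"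
    by (cases x) (simp add: qreal_def quat_i_def complex_eq_iff)
  then show "x \<in> slice quat_i"
    unfolding slice_def by blast
qed (auto simp: slice_def qreal_def quat_i_def)

text \<open>Any two imaginary units are conjugate: u = 1 - i I (normalised) satisfies u I = i u,
  unless 1 - i I = 0, i.e. I = -i, where the unit j does the job.\<close>
lemma exists_unit_qmul_eq_qmul_quat_i:
  assumes I: "qmul I I = - qone"
  shows "\<exists>u. norm u = 1 \<and> qmul u I = qmul quat_i u"
proof -
  define q where "q = qone - qmul quat_i I"
  have qI: "qmul q I = I + quat_i"
    by (simp add: q_def qmul_diff_left qmul_assoc I qmul_minus_right)
  have iq: "qmul quat_i q = quat_i + I"
    by (simp add: q_def qmul_diff_right qmul_assoc[symmetric] qmul_quat_i_quat_i qmul_minus_left)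
  show ?thesis
  proof (cases "q = 0")
    case False
    then show ?thesis
      by (intro exI[of _ "(1 / norm q) *\<^sub>R q"])
        (simp add: qmul_scaleR_left qmul_scaleR_right qI iq add.commute)
  next
    case True
    then have "qmul (qmul quat_i quat_i) I = quat_i"
      by (simp add: q_def qmul_assoc)
    then have "- I = quat_i"
      by (simp add: qmul_quat_i_quat_i qmul_minus_left)
    then have "I = - quat_i"
      by (metis minus_minus)
    then show ?thesis
      by (intro exI[of _ "(0, 1)"]) (simp add: quat_i_def)
  qed
qed

section \<open>Slice functions preserving C_i\<close>

definition H2_composition_bounds :: "(nat \<Rightarrow> quat) \<Rightarrow> (nat \<Rightarrow> quat) \<Rightarrow> bool" where
  "H2_composition_bounds a c \<longleftrightarrow>
     (\<forall>k. summable (\<lambda>n. qmul (spow c n k) (a n)))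
     \<and> in_H2 (comp_right a c)
     \<and> H2_norm (comp_right a c) \<le> sqrt ((1 + norm (c 0)) / (1 - norm (c 0))) * H2_norm a
     \<and> (\<forall>k. summable (\<lambda>n. qmul (a n) (spow c n k)))
     \<and> in_H2 (comp_left a c)
     \<and> H2_norm (comp_left a c) \<le> sqrt ((1 + norm (c 0)) / (1 - norm (c 0))) * H2_norm a"

lemma sums_Pair:
  assumes "f sums a" "g sums b"
  shows "(\<lambda>n. (f n, g n)) sums (a, b)"
proof -
  have "(\<lambda>n. \<Sum>i<n. (f i, g i)) = (\<lambda>n. (\<Sum>i<n. f i, \<Sum>i<n. g i))"
    by (simp add: fun_eq_iff prod_eq_iff fst_sum snd_sum)
  then show ?thesis
    using assms unfolding sums_def by (simp add: tendsto_Pair)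
qed

lemma powser_eq_0_imp_coeff_eq_0:
  fixes a :: "nat \<Rightarrow> 'a::{real_normed_field,banach}"
  assumes "0 < r" and sums0: "\<And>z. norm z < r \<Longrightarrow> (\<lambda>n. a n * z ^ n) sums 0"
  shows "a m = 0"
proof (cases "m = 0")
  case True
  then show ?thesis
    using sums_unique2[OF sums0 powser_sums_zero] \<open>0 < r\<close> by simp
next
  case False
  show ?thesis
  proof (rule ccontr)
    assume "a m \<noteq> 0"
    show False
    proof (rule powser_0_nonzero[where a = a and \<xi> = 0 and f = "\<lambda>_. 0" and r = r])
      fix s :: real
      assume "0 < s" and nonzero: "\<And>z::'a. z \<in> cball 0 s - {0} \<Longrightarrow> (0::'a) \<noteq> 0"
      show False
        using nonzero[of "of_real s"] \<open>0 < s\<close> by simp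
    qed (use \<open>0 < r\<close> \<open>a m \<noteq> 0\<close> sums0 False in auto)
  qed
qed

text \<open>A slice regular function preserving the slice C_i has coefficients in C_i: on C_i its
  j-component is the power series with the j-components of the coefficients, and it vanishes.\<close>
lemma snd_coeff_eq_0_if_preserves_slice_quat_i:
  assumes reg: "slice_regular_ball c"
    and preserves: "\<forall>q\<in>qball \<inter> slice quat_i. pseries c q \<in> slice quat_i"
  shows "snd (c n) = 0"
proof (rule powser_eq_0_imp_coeff_eq_0[of 1])
  fix z :: complex
  assume z: "cmod z < 1"
  then have in_ball: "(z, 0) \<in> qball"
    by (simp add: qball_def)
  then have "(\<lambda>n. qmul (qpow (z, 0) n) (c n)) sums pseries c (z, 0)"
    using reg by (simp add: slice_regular_ball_def pseries_def summable_sums)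
  from bounded_linear.sums[OF bounded_linear_snd this]
  have "(\<lambda>n. snd (c n) * z ^ n) sums snd (pseries c (z, 0))"
    by (simp add: qpow_Pair_0 qmul_def mult.commute)
  moreover have "snd (pseries c (z, 0)) = 0"
    using preserves in_ball by (simp add: slice_quat_i_iff)
  ultimately show "(\<lambda>n. snd (c n) * z ^ n) sums 0"
    by simp
qed simp

lemma disc_selfmap_fst:
  assumes reg: "slice_regular_ball c"
    and maps: "\<forall>q\<in>qball. pseries c q \<in> qball"
    and complex: "\<And>n. snd (c n) = 0"
  shows "disc_selfmap (\<lambda>n. fst (c n))"
proof
  fix z :: complex
  assume z: "cmod z < 1"
  then have in_ball: "(z, 0) \<in> qball"
    by (simp add: qball_def)
  then have "(\<lambda>n. qmul (qpow (z, 0) n) (c n)) sums pseries c (z, 0)"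
    using reg by (simp add: slice_regular_ball_def pseries_def summable_sums)
  from bounded_linear.sums[OF bounded_linear_fst this]
  have sums: "(\<lambda>n. fst (c n) * z ^ n) sums fst (pseries c (z, 0))"
    using complex by (simp add: qpow_Pair_0 qmul_def mult.commute)
  then show "summable (\<lambda>n. fst (c n) * z ^ n)"
    by (rule sums_summable)
  have "norm (pseries c (z, 0)) < 1"
    using maps in_ball by (simp add: qball_def)
  then have "cmod (fst (pseries c (z, 0))) < 1"
    using norm_fst_le[of "fst (pseries c (z, 0))" "snd (pseries c (z, 0))"] by simp
  then show "cmod (\<Sum>n. fst (c n) * z ^ n) < 1"
    using sums by (simp add: sums_iff)
qed

lemma spow_complex:
  assumes "\<And>n. snd (c n) = 0"
  shows "spow c n k = (fps_nth (Abs_fps (\<lambda>i. fst (c i)) ^ n) k, 0)"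
proof (induction n arbitrary: k)
  case 0
  then show ?case
    by (simp add: qone_def zero_prod_def)
next
  case (Suc n)
  have "spow c (Suc n) k = (\<Sum>i\<le>k. (fst (c i) * fps_nth (Abs_fps (\<lambda>i. fst (c i)) ^ n) (k - i), 0))"
    by (simp add: sprod_def Suc qmul_def assms)
  then show ?case
    by (simp add: prod_eq_iff fst_sum snd_sum fps_mult_nth atLeast0AtMost)
qed

lemma H2_bound_Pair:
  fixes u v \<alpha> \<beta> :: "nat \<Rightarrow> complex"
  assumes "summable (\<lambda>k. (cmod (u k))\<^sup>2)" "summable (\<lambda>k. (cmod (v k))\<^sup>2)"
    and "summable (\<lambda>n. (cmod (\<alpha> n))\<^sup>2)" "summable (\<lambda>n. (cmod (\<beta> n))\<^sup>2)"
    and "(\<Sum>k. (cmod (u k))\<^sup>2) \<le> K * (\<Sum>n. (cmod (\<alpha> n))\<^sup>2)"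
    and "(\<Sum>k. (cmod (v k))\<^sup>2) \<le> K * (\<Sum>n. (cmod (\<beta> n))\<^sup>2)"
  shows "in_H2 (\<lambda>k. (u k, v k))"
    and "H2_norm (\<lambda>k. (u k, v k)) \<le> sqrt K * H2_norm (\<lambda>n. (\<alpha> n, \<beta> n))"
  using assms
  by (simp_all add: in_H2_def H2_norm_def norm_Pair_sq summable_add suminf_add[symmetric]
      distrib_left flip: real_sqrt_mult)

text \<open>For coefficients in C_i, writing a_n = \<alpha>_n + \<beta>_n j the quaternion products split as
  (\<gamma>, 0)(\<alpha>, \<beta>) = (\<gamma> \<alpha>, \<gamma> \<beta>) and (\<alpha>, \<beta>)(\<gamma>, 0) = (\<alpha> \<gamma>, \<beta> cnj \<gamma>), so both compositions reduce
  to complex compositions with the self-maps \<gamma> and cnj \<gamma>.\<close>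
lemma H2_composition_bounds_quat_i:
  assumes reg: "slice_regular_ball c"
    and maps: "\<forall>q\<in>qball. pseries c q \<in> qball"
    and preserves: "\<forall>q\<in>qball \<inter> slice quat_i. pseries c q \<in> slice quat_i"
    and a: "in_H2 a"
  shows "H2_composition_bounds a c"
proof -
  define \<gamma> where "\<gamma> n = fst (c n)" for n
  define \<alpha> where "\<alpha> n = fst (a n)" for n
  define \<beta> where "\<beta> n = snd (a n)" for n
  let ?K = "(1 + cmod (\<gamma> 0)) / (1 - cmod (\<gamma> 0))"
  let ?b = "\<lambda>g x k. \<Sum>n. fps_nth (Abs_fps g ^ n) k * x n"
  have complex: "snd (c n) = 0" for n
    using snd_coeff_eq_0_if_preserves_slice_quat_i[OF reg preserves] .
  interpret disc_selfmap \<gamma>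
    unfolding \<gamma>_def by (rule disc_selfmap_fst[OF reg maps complex])
  interpret cnj: disc_selfmap "\<lambda>n. cnj (\<gamma> n)"
    by (rule disc_selfmap_cnj)
  have spow: "spow c n k = (fps_nth (Abs_fps \<gamma> ^ n) k, 0)" for n k
    unfolding \<gamma>_def by (rule spow_complex[OF complex])
  have a_eq: "a n = (\<alpha> n, \<beta> n)" for n
    by (simp add: \<alpha>_def \<beta>_def)
  have \<alpha>: "summable (\<lambda>n. (cmod (\<alpha> n))\<^sup>2)" and \<beta>: "summable (\<lambda>n. (cmod (\<beta> n))\<^sup>2)"
    using a by (auto simp: in_H2_def a_eq norm_Pair_sq
        intro: summable_comparison_test'[where N = 0])
  have right: "(\<lambda>n. qmul (spow c n k) (a n)) sums (?b \<gamma> \<alpha> k, ?b \<gamma> \<beta> k)" for k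
    using sums_Pair[OF summable_sums summable_sums, OF summable_composition_coeff[OF \<alpha>]
        summable_composition_coeff[OF \<beta>]]
    by (simp add: spow a_eq)
  have left: "(\<lambda>n. qmul (a n) (spow c n k)) sums (?b \<gamma> \<alpha> k, ?b (\<lambda>n. cnj (\<gamma> n)) \<beta> k)" for k
    using sums_Pair[OF summable_sums summable_sums, OF summable_composition_coeff[OF \<alpha>]
        cnj.summable_composition_coeff[OF \<beta>]]
    by (simp add: spow a_eq fps_nth_power_cnj mult.commute)
  have "comp_right a c = (\<lambda>k. (?b \<gamma> \<alpha> k, ?b \<gamma> \<beta> k))"
    and "comp_left a c = (\<lambda>k. (?b \<gamma> \<alpha> k, ?b (\<lambda>n. cnj (\<gamma> n)) \<beta> k))"
    using right left by (auto simp: comp_right_def comp_left_def sums_iff)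
  moreover have "norm (c 0) = cmod (\<gamma> 0)"
    using complex[of 0] by (cases "c 0") (simp add: \<gamma>_def norm_Pair)
  moreover have "H2_norm a = H2_norm (\<lambda>n. (\<alpha> n, \<beta> n))"
    by (simp only: a_eq[symmetric])
  moreover note H2_bound_Pair[OF composition_coeff_bound(1)[OF \<alpha>] composition_coeff_bound(1)[OF \<beta>]
      \<alpha> \<beta> composition_coeff_bound(2)[OF \<alpha>] composition_coeff_bound(2)[OF \<beta>]]
    H2_bound_Pair[OF composition_coeff_bound(1)[OF \<alpha>] cnj.composition_coeff_bound(1)[OF \<beta>]
      \<alpha> \<beta> composition_coeff_bound(2)[OF \<alpha>]
      cnj.composition_coeff_bound(2)[OF \<beta>, unfolded complex_mod_cnj]]
  ultimately show ?thesis
    using right left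
    by (simp add: H2_composition_bounds_def sums_iff)
qed

section \<open>Rotating the slice\<close>

locale unit_quat =
  fixes u :: quat
  assumes norm_u: "norm u = 1"
begin

definition rot :: "quat \<Rightarrow> quat" where
  "rot x = qmul (qmul u x) (qconj u)"

definition unrot :: "quat \<Rightarrow> quat" where
  "unrot x = qmul (qmul (qconj u) x) u"

lemma qmul_u_qconj_u: "qmul u (qconj u) = qone"
  and qmul_qconj_u_u: "qmul (qconj u) u = qone"
  using norm_u by (simp_all add: qmul_qconj_right qmul_qconj_left)

lemma unrot_rot [simp]: "unrot (rot x) = x"
  and rot_unrot [simp]: "rot (unrot x) = x"
  by (simp_all add: rot_def unrot_def qmul_assoc qmul_u_qconj_u qmul_qconj_u_u
      flip: qmul_assoc[of u "qconj u"] qmul_assoc[of "qconj u" u])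

lemma rot_qmul: "rot (qmul x y) = qmul (rot x) (rot y)"
  by (simp add: rot_def qmul_assoc qmul_qconj_u_u flip: qmul_assoc[of "qconj u"])

lemma rot_add: "rot (x + y) = rot x + rot y"
  and rot_scaleR: "rot (r *\<^sub>R x) = r *\<^sub>R rot x"
  by (simp_all add: rot_def qmul_add_left qmul_add_right qmul_scaleR_left qmul_scaleR_right)

lemma rot_qone [simp]: "rot qone = qone"
  by (simp add: rot_def qmul_u_qconj_u)

lemma rot_qreal [simp]: "rot (qreal r) = qreal r"
  by (simp add: qreal_eq_scaleR rot_scaleR)

lemma rot_zero [simp]: "rot 0 = 0"
  by (simp add: rot_def)

lemma rot_sum: "rot (sum f A) = (\<Sum>i\<in>A. rot (f i))"
  by (induction A rule: infinite_finite_induct) (simp_all add: rot_add)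

lemma rot_qpow: "rot (qpow x n) = qpow (rot x) n"
  by (induction n) (simp_all add: rot_qmul)

lemma norm_rot [simp]: "norm (rot x) = norm x"
  and norm_unrot [simp]: "norm (unrot x) = norm x"
  by (simp_all add: rot_def unrot_def norm_qmul norm_u)

lemma bounded_linear_rot: "bounded_linear rot"
  and bounded_linear_unrot: "bounded_linear unrot"
  unfolding rot_def unrot_def
  by (rule bounded_linear_compose[OF bounded_linear_qmul_left bounded_linear_qmul_right])+

lemma summable_rot_iff: "summable (\<lambda>n. rot (f n)) \<longleftrightarrow> summable f"
  using bounded_linear.summable[OF bounded_linear_rot, of f]
    bounded_linear.summable[OF bounded_linear_unrot, of "\<lambda>n. rot (f n)"] by auto

lemma suminf_rot: "summable f \<Longrightarrow> rot (\<Sum>n. f n) = (\<Sum>n. rot (f n))"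
  by (rule bounded_linear.suminf[OF bounded_linear_rot])

lemma rot_in_slice_iff: "rot x \<in> slice (rot I) \<longleftrightarrow> x \<in> slice I"
proof
  assume "x \<in> slice I"
  then obtain a b where "x = qreal a + b *\<^sub>R I"
    unfolding slice_def by blast
  then have "rot x = qreal a + b *\<^sub>R rot I"
    by (simp add: rot_add rot_scaleR)
  then show "rot x \<in> slice (rot I)"
    unfolding slice_def by blast
next
  assume "rot x \<in> slice (rot I)"
  then obtain a b where "rot x = rot (qreal a + b *\<^sub>R I)"
    by (auto simp: slice_def rot_add rot_scaleR)
  then have "x = qreal a + b *\<^sub>R I"
    by (metis unrot_rot)
  then show "x \<in> slice I"
    by (auto simp: slice_def)
qed

lemma qmul_qpow_rot: "qmul (qpow q n) (rot x) = rot (qmul (qpow (unrot q) n) x)"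
  by (simp add: rot_qmul rot_qpow)

lemma slice_regular_ball_rot: "slice_regular_ball (\<lambda>n. rot (c n)) \<longleftrightarrow> slice_regular_ball c"
proof
  assume "slice_regular_ball (\<lambda>n. rot (c n))"
  then have reg: "summable (\<lambda>n. qmul (qpow (unrot q) n) (c n))" if "q \<in> qball" for q
    using that by (simp add: slice_regular_ball_def qmul_qpow_rot summable_rot_iff)
  show "slice_regular_ball c"
    unfolding slice_regular_ball_def
  proof
    fix q
    assume "q \<in> qball"
    then have "rot q \<in> qball"
      by (simp add: qball_def)
    then show "summable (\<lambda>n. qmul (qpow q n) (c n))"
      using reg[of "rot q"] by simp
  qed
next
  assume reg: "slice_regular_ball c"
  show "slice_regular_ball (\<lambda>n. rot (c n))"
    unfolding slice_regular_ball_def qmul_qpow_rot summable_rot_iff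
  proof
    fix q
    assume "q \<in> qball"
    then have "unrot q \<in> qball"
      by (simp add: qball_def)
    then show "summable (\<lambda>n. qmul (qpow (unrot q) n) (c n))"
      using reg by (simp add: slice_regular_ball_def)
  qed
qed

lemma pseries_rot:
  assumes "slice_regular_ball c" "q \<in> qball"
  shows "pseries (\<lambda>n. rot (c n)) q = rot (pseries c (unrot q))"
proof -
  have "unrot q \<in> qball"
    using assms(2) by (simp add: qball_def)
  then have "summable (\<lambda>n. qmul (qpow (unrot q) n) (c n))"
    using assms(1) by (simp add: slice_regular_ball_def)
  then show ?thesis
    unfolding pseries_def qmul_qpow_rot by (rule suminf_rot[symmetric])
qed

lemma pseries_rot_mem_qball:
  assumes "slice_regular_ball c" "\<forall>q\<in>qball. pseries c q \<in> qball"
  shows "\<forall>q\<in>qball. pseries (\<lambda>n. rot (c n)) q \<in> qball"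
proof
  fix q
  assume q: "q \<in> qball"
  then have "unrot q \<in> qball"
    by (simp add: qball_def)
  then have "pseries c (unrot q) \<in> qball"
    using assms(2) by blast
  then show "pseries (\<lambda>n. rot (c n)) q \<in> qball"
    using assms(1) q by (simp add: pseries_rot qball_def)
qed

lemma pseries_rot_mem_slice:
  assumes "slice_regular_ball c" "\<forall>q\<in>qball \<inter> slice I. pseries c q \<in> slice I"
  shows "\<forall>q\<in>qball \<inter> slice (rot I). pseries (\<lambda>n. rot (c n)) q \<in> slice (rot I)"
proof
  fix q
  assume q: "q \<in> qball \<inter> slice (rot I)"
  then have "unrot q \<in> qball \<inter> slice I"
    using rot_in_slice_iff[of "unrot q" I] by (simp add: qball_def)
  then show "pseries (\<lambda>n. rot (c n)) q \<in> slice (rot I)"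
    using assms q by (simp add: pseries_rot rot_in_slice_iff)
qed

lemma spow_rot: "spow (\<lambda>n. rot (c n)) n k = rot (spow c n k)"
  by (induction n arbitrary: k) (simp_all add: sprod_def rot_sum rot_qmul)

text \<open>Conjugation by a unit quaternion is an isometric automorphism, so it preserves every
  quantity in the conclusion.\<close>
lemma H2_composition_bounds_rot:
  assumes "H2_composition_bounds (\<lambda>n. rot (a n)) (\<lambda>n. rot (c n))"
  shows "H2_composition_bounds a c"
proof -
  have right: "qmul (spow (\<lambda>n. rot (c n)) n k) (rot (a n)) = rot (qmul (spow c n k) (a n))"
    and left: "qmul (rot (a n)) (spow (\<lambda>n. rot (c n)) n k) = rot (qmul (a n) (spow c n k))" for n k
    by (simp_all add: spow_rot rot_qmul)
  have summable: "summable (\<lambda>n. qmul (spow c n k) (a n))" "summable (\<lambda>n. qmul (a n) (spow c n k))" for k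
    using assms by (simp_all add: H2_composition_bounds_def right left summable_rot_iff)
  have "norm (comp_right (\<lambda>n. rot (a n)) (\<lambda>n. rot (c n)) k) = norm (comp_right a c k)"
    and "norm (comp_left (\<lambda>n. rot (a n)) (\<lambda>n. rot (c n)) k) = norm (comp_left a c k)" for k
    by (simp_all add: comp_right_def comp_left_def right left summable flip: suminf_rot)
  then show ?thesis
    using assms summable by (simp add: H2_composition_bounds_def in_H2_def H2_norm_def)
qed

end

theorem theorem7p1:
  fixes c a :: "nat \<Rightarrow> quat"
  assumes phi_reg: "slice_regular_ball c"
    and phi_maps: "\<forall>q\<in>qball. pseries c q \<in> qball"
    and phi_slice: "\<exists>I\<in>imag_units. \<forall>q\<in>qball \<inter> slice I. pseries c q \<in> slice I"
    and f_H2: "in_H2 a"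
  shows "(\<forall>k. summable (\<lambda>n. qmul (spow c n k) (a n)))
         \<and> in_H2 (comp_right a c)
         \<and> H2_norm (comp_right a c)
             \<le> sqrt ((1 + norm (c 0)) / (1 - norm (c 0))) * H2_norm a
         \<and> (\<forall>k. summable (\<lambda>n. qmul (a n) (spow c n k)))
         \<and> in_H2 (comp_left a c)
         \<and> H2_norm (comp_left a c)
             \<le> sqrt ((1 + norm (c 0)) / (1 - norm (c 0))) * H2_norm a"
proof -
  obtain I where "qmul I I = - qone" and preserves: "\<forall>q\<in>qball \<inter> slice I. pseries c q \<in> slice I"
    using phi_slice unfolding imag_units_def by blast
  then obtain u where "norm u = 1" and uI: "qmul u I = qmul quat_i u"
    using exists_unit_qmul_eq_qmul_quat_i by blast
  interpret unit_quat u
    by standard fact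
  have rot_I: "rot I = quat_i"
    by (simp add: rot_def uI qmul_assoc qmul_u_qconj_u)
  have "H2_composition_bounds (\<lambda>n. rot (a n)) (\<lambda>n. rot (c n))"
  proof (rule H2_composition_bounds_quat_i)
    show "slice_regular_ball (\<lambda>n. rot (c n))"
      using phi_reg by (simp add: slice_regular_ball_rot)
    show "\<forall>q\<in>qball. pseries (\<lambda>n. rot (c n)) q \<in> qball"
      using phi_reg phi_maps by (rule pseries_rot_mem_qball)
    show "\<forall>q\<in>qball \<inter> slice quat_i. pseries (\<lambda>n. rot (c n)) q \<in> slice quat_i"
      using pseries_rot_mem_slice[OF phi_reg preserves] by (simp only: rot_I)
    show "in_H2 (\<lambda>n. rot (a n))"
      using f_H2 by (simp add: in_H2_def)
  qed
  then have "H2_composition_bounds a c"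
    by (rule H2_composition_bounds_rot)
  then show ?thesis
    unfolding H2_composition_bounds_def .
qed

end
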